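(* Let $(M,\mathrm{d})$ be a metric space, $\mathcal X$ a set, $\tau>0$, $\mathcal S\subseteq M^{\mathcal X}$ and $f\in M^{\mathcal X}\setminus\mathcal S$. Let $\mathcal A$ be a deterministic algorithm that solves $\mathtt{Dec}(\mathcal S,f)$ from $q$ many $\tau$-accurate evaluation queries. Then for any probability measure $\mu$ over $\mathcal S$, $$q\ge\left(\max_{x\in\mathcal X}\Pr_{s\sim\mu}[\mathrm{d}(s(x),f(x))>\tau]\right)^{-1}.$$
   Context: For $s\in M^{\mathcal X}$, the evaluation oracle $\mathrm{Eval}_\tau(s)$, queried with $x\in\mathcal X$, returns some $v\in M$ with $\mathrm{d}(v,s(x))\le\tau$ (any such value may be returned); this is a $\tau$-accurate evaluation query. The decision problem $\mathtt{Dec}(\mathcal S,f)$: given evaluation-oracle access to an unknown $s\in\mathcal S\cup\{f\}$, decide whether $s\in\mathcal S$ or $s=f$. Solving it means being correct for every such $s$ and every valid oracle behaviour. *)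

theory Defs
  imports "HOL-Probability.Probability"
begin

text \<open>A deterministic adaptive algorithm making q evaluation queries is modelled as a
decision tree: qry gives the next query point as a function of the answers received so
far, and out gives the final decision (True = "s is in S", False = "s = f") as a function
of the complete list of q answers.\<close>

definition valid_answers ::
  "('m list \<Rightarrow> 'x) \<Rightarrow> real \<Rightarrow> ('x \<Rightarrow> 'm::metric_space) \<Rightarrow> 'm list \<Rightarrow> bool" where
  "valid_answers qry \<tau> s as \<longleftrightarrow>
     (\<forall>i < length as. dist (as ! i) (s (qry (take i as))) \<le> \<tau>)"

definition solves_Dec ::
  "('m list \<Rightarrow> 'x) \<Rightarrow> ('m list \<Rightarrow> bool) \<Rightarrow> nat \<Rightarrow> real \<Rightarrow>
   ('x \<Rightarrow> 'm::metric_space) set \<Rightarrow> ('x \<Rightarrow> 'm) \<Rightarrow> bool" where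
  "solves_Dec qry out q \<tau> S f \<longleftrightarrow>
     (\<forall>s \<in> S \<union> {f}. \<forall>as. length as = q \<and> valid_answers qry \<tau> s as \<longrightarrow> out as = (s \<in> S))"

end

theory Submission
  imports Defs
begin

text \<open>Run the algorithm against the oracle that answers every query with the exact value
of f; after the queries x_0, ..., x_(q-1) it must answer "s = f". The same transcript is
a valid oracle behaviour for every s that is tau-close to f at all x_i, so no s in S can
be tau-close to f at all of them: the q events d(s(x_i), f(x_i)) > tau cover S, and the
union bound gives 1 \<le> q max_x Pr[d(s(x), f(x)) > tau].\<close>

fun exact_answers :: "('x \<Rightarrow> 'm) \<Rightarrow> ('m list \<Rightarrow> 'x) \<Rightarrow> nat \<Rightarrow> 'm list" where
  "exact_answers f qry 0 = []"
| "exact_answers f qry (Suc n) = exact_answers f qry n @ [f (qry (exact_answers f qry n))]"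

lemma length_exact_answers [simp]: "length (exact_answers f qry n) = n"
  by (induction n) auto

lemma take_exact_answers [simp]:
  "i \<le> n \<Longrightarrow> take i (exact_answers f qry n) = exact_answers f qry i"
  by (induction n) (auto simp: le_Suc_eq)

lemma nth_exact_answers [simp]:
  "i < n \<Longrightarrow> exact_answers f qry n ! i = f (qry (exact_answers f qry i))"
  by (induction n) (auto simp: nth_append less_Suc_eq)

lemma valid_answers_exact_answers_iff:
  "valid_answers qry \<tau> s (exact_answers f qry n) \<longleftrightarrow>
     (\<forall>i < n. dist (s (qry (exact_answers f qry i))) (f (qry (exact_answers f qry i))) \<le> \<tau>)"
  by (simp add: valid_answers_def dist_commute)

lemma solves_Dec_queries_cover:
  assumes "solves_Dec qry out q \<tau> S f" and "f \<notin> S" and "\<tau> \<ge> 0"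
  shows "S \<subseteq> (\<Union>i<q. {s. dist (s (qry (exact_answers f qry i))) (f (qry (exact_answers f qry i))) > \<tau>})"
    (is "_ \<subseteq> ?cover")
proof
  fix s assume "s \<in> S"
  have "out (exact_answers f qry q) = False"
    using assms by (auto simp: solves_Dec_def valid_answers_exact_answers_iff)
  then have "\<not> valid_answers qry \<tau> s (exact_answers f qry q)"
    using assms(1) \<open>s \<in> S\<close> by (auto simp: solves_Dec_def)
  then show "s \<in> ?cover"
    by (auto simp: valid_answers_exact_answers_iff not_le)
qed

lemma (in prob_space) one_le_card_mult_SUP_prob_of_cover:
  assumes "finite I" and "\<And>x. B x \<in> events" and "space M \<subseteq> (\<Union>i\<in>I. B (g i))"
  shows "1 \<le> real (card I) * (SUP x. prob (B x))"
proof -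
  have bdd: "bdd_above (range (\<lambda>x. prob (B x)))"
    by (rule bdd_aboveI[where M = 1]) auto
  have "1 = prob (space M)"
    by (simp add: prob_space)
  also have "\<dots> \<le> prob (\<Union>i\<in>I. B (g i))"
    using assms by (intro finite_measure_mono) auto
  also have "\<dots> \<le> (\<Sum>i\<in>I. prob (B (g i)))"
    using assms by (intro finite_measure_subadditive_finite) auto
  also have "\<dots> \<le> (\<Sum>i\<in>I. SUP x. prob (B x))"
    using bdd by (intro sum_mono cSUP_upper) auto
  finally show ?thesis
    by simp
qed

theorem mainTheorem3:
  fixes S :: "('x \<Rightarrow> 'm::metric_space) set" and f :: "'x \<Rightarrow> 'm"
    and \<tau> :: real and q :: nat
    and qry :: "'m list \<Rightarrow> 'x" and out :: "'m list \<Rightarrow> bool"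
    and \<mu> :: "('x \<Rightarrow> 'm) measure"
  assumes "\<tau> > 0"
    and "f \<notin> S"
    and "solves_Dec qry out q \<tau> S f"
    and "prob_space \<mu>" and "space \<mu> = S"
    and "\<And>x. {s \<in> space \<mu>. dist (s x) (f x) > \<tau>} \<in> sets \<mu>"
  shows "1 \<le> real q * (SUP x. measure \<mu> {s \<in> space \<mu>. dist (s x) (f x) > \<tau>})"
proof -
  interpret prob_space \<mu> by fact
  let ?x = "\<lambda>i. qry (exact_answers f qry i)"
  have "space \<mu> \<subseteq> (\<Union>i<q. {s \<in> space \<mu>. dist (s (?x i)) (f (?x i)) > \<tau>})"
    using solves_Dec_queries_cover[OF assms(3,2)] assms(1,5) by auto
  then show ?thesis
    using one_le_card_mult_SUP_prob_of_cover[where I = "{..<q}" and g = ?x] assms(6) by simp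
qed

end
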